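(* Let $\ell\in\mathbb{N}$ and let $G$ be a finite $\ell$-tuple regular group that can be generated by $\ell$ elements. Then $G$ is $1$-ultrahomogeneous, i.e. any two elements of $G$ of the same order are mapped to each other by some automorphism of $G$.
   Context: For $\ell\in\mathbb{N}$, a finite group $G$ is $\ell$-tuple regular if for all tuples $(g_1,\ldots,g_\ell),(h_1,\ldots,h_\ell)\in G^\ell$ (entries may repeat) for which $g_i\mapsto h_i$ defines an isomorphism $\langle g_1,\ldots,g_\ell\rangle\to\langle h_1,\ldots,h_\ell\rangle$, there exists a bijection $\Psi\colon G\to G$ such that for every $g\in G$ the assignment $g_1\mapsto h_1,\ldots,g_\ell\mapsto h_\ell,g\mapsto\Psi(g)$ defines an isomorphism $\langle g_1,\ldots,g_\ell,g\rangle\to\langle h_1,\ldots,h_\ell,\Psi(g)\rangle$. *)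

theory Defs
  imports "HOL-Algebra.Algebra"
begin

text \<open>Tuples of length l are modelled as functions nat => 'a, of which only the
entries at indices i < l matter.\<close>

definition tuple_iso :: "('a, 'b) monoid_scheme \<Rightarrow> nat \<Rightarrow> (nat \<Rightarrow> 'a) \<Rightarrow> (nat \<Rightarrow> 'a) \<Rightarrow> bool" where
  "tuple_iso G l g h \<longleftrightarrow>
     (\<exists>\<phi>. \<phi> \<in> iso (G\<lparr>carrier := generate G (g ` {..<l})\<rparr>)
                   (G\<lparr>carrier := generate G (h ` {..<l})\<rparr>)
          \<and> (\<forall>i<l. \<phi> (g i) = h i))"

definition tuple_regular :: "('a, 'b) monoid_scheme \<Rightarrow> nat \<Rightarrow> bool" where
  "tuple_regular G l \<longleftrightarrow>
     (\<forall>g h. (\<forall>i<l. g i \<in> carrier G) \<longrightarrow> (\<forall>i<l. h i \<in> carrier G) \<longrightarrow>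
        tuple_iso G l g h \<longrightarrow>
        (\<exists>\<Psi>. bij_betw \<Psi> (carrier G) (carrier G) \<and>
             (\<forall>x\<in>carrier G. tuple_iso G (Suc l) (g(l := x)) (h(l := \<Psi> x)))))"

end

theory Submission
  imports Defs
begin

text \<open>Elements of equal order generate isomorphic cyclic subgroups, via an isomorphism sending
  one to the other; so the pair \<open>(x, y)\<close> is a partial isomorphism. Tuple regularity lets us extend
  a partial isomorphism with at most \<open>l\<close> pairs by one more pair whose first entry is prescribed.
  Adding the \<open>l\<close> generators of \<open>G\<close> one at a time to \<open>(x, y)\<close> thus yields an isomorphism from
  \<open>G\<close> onto a subgroup of \<open>G\<close> mapping \<open>x\<close> to \<open>y\<close>; as \<open>G\<close> is finite, that subgroup is \<open>G\<close>.\<close>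

definition partial_iso :: "('a, 'b) monoid_scheme \<Rightarrow> ('a \<times> 'a) set \<Rightarrow> bool" where
  "partial_iso G P \<longleftrightarrow>
     (\<exists>\<phi>. \<phi> \<in> iso (G\<lparr>carrier := generate G (fst ` P)\<rparr>) (G\<lparr>carrier := generate G (snd ` P)\<rparr>)
          \<and> (\<forall>(a, b)\<in>P. \<phi> a = b))"

lemma tuple_iso_iff_partial_iso:
  "tuple_iso G l g h \<longleftrightarrow> partial_iso G ((\<lambda>i. (g i, h i)) ` {..<l})"
  by (simp add: tuple_iso_def partial_iso_def image_image) (simp add: Ball_def)

lemma (in group) cyclic_subgroups_iso:
  assumes x: "x \<in> carrier G" and y: "y \<in> carrier G" and ord_eq: "ord x = ord y"
  shows "\<exists>\<phi>\<in>iso (G\<lparr>carrier := generate G {x}\<rparr>) (G\<lparr>carrier := generate G {y}\<rparr>). \<phi> x = y"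
proof -
  have pow_eq_iff: "x [^] i = x [^] j \<longleftrightarrow> y [^] i = y [^] j" for i j :: int
    using x y ord_eq by (simp add: int_pow_eq)
  define \<phi> where "\<phi> z = y [^] (SOME i::int. z = x [^] i)" for z
  have \<phi>_pow: "\<phi> (x [^] i) = y [^] i" for i :: int
  proof -
    have "x [^] i = x [^] (SOME j::int. x [^] i = x [^] j)"
      by (rule someI_ex) blast
    then show ?thesis
      unfolding \<phi>_def pow_eq_iff by simp
  qed
  have gen_x: "generate G {x} = range (\<lambda>i::int. x [^] i)"
    using generate_pow[OF x] by auto
  have gen_y: "generate G {y} = range (\<lambda>i::int. y [^] i)"
    using generate_pow[OF y] by auto
  have "\<phi> \<in> hom (G\<lparr>carrier := generate G {x}\<rparr>) (G\<lparr>carrier := generate G {y}\<rparr>)"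
    by (rule homI) (auto simp: gen_x gen_y \<phi>_pow x y simp flip: int_pow_mult)
  moreover have "bij_betw \<phi> (generate G {x}) (generate G {y})"
  proof (rule bij_betw_imageI)
    show "inj_on \<phi> (generate G {x})"
      by (auto simp: gen_x \<phi>_pow pow_eq_iff intro!: inj_onI)
    show "\<phi> ` generate G {x} = generate G {y}"
      by (auto simp: gen_x gen_y \<phi>_pow image_image)
  qed
  moreover have "\<phi> x = y"
    using \<phi>_pow[of 1] x y by simp
  ultimately show ?thesis
    by (auto simp: iso_def)
qed

lemma finite_iso_onto_subset_eq:
  assumes "finite (carrier G)" "H \<subseteq> carrier G" "\<phi> \<in> iso G (G\<lparr>carrier := H\<rparr>)"
  shows "H = carrier G"
proof -
  have "card H = card (carrier G)"
    using assms(3) bij_betw_same_card by (fastforce simp: iso_def)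
  then show ?thesis
    using assms(1,2) card_subset_eq by metis
qed

lemma (in group) partial_iso_generating_extends_to_automorphism:
  assumes "finite (carrier G)" "partial_iso G P" "snd ` P \<subseteq> carrier G"
    and gen: "generate G (fst ` P) = carrier G"
  shows "\<exists>\<phi>\<in>iso G G. \<forall>(a, b)\<in>P. \<phi> a = b"
proof -
  obtain \<phi> where \<phi>: "\<phi> \<in> iso G (G\<lparr>carrier := generate G (snd ` P)\<rparr>)" "\<forall>(a, b)\<in>P. \<phi> a = b"
    using assms(2) gen by (auto simp: partial_iso_def)
  have "generate G (snd ` P) = carrier G"
    using finite_iso_onto_subset_eq[OF assms(1) generate_incl[OF assms(3)] \<phi>(1)] .
  then show ?thesis
    using \<phi> by auto
qed

lemma ex_tuple_enumerating:
  assumes "finite P" "P \<noteq> {}" "card P \<le> l"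
  shows "\<exists>g h. (\<lambda>i. (g i, h i)) ` {..<l} = P"
proof -
  obtain e where e: "bij_betw e {0..<card P} P"
    using ex_bij_betw_nat_finite[OF assms(1)] by blast
  have "card P > 0"
    using assms(1,2) by auto
  define e' where "e' i = (if i < card P then e i else e 0)" for i
  have "e' ` {..<l} = P"
  proof
    show "e' ` {..<l} \<subseteq> P"
      using e \<open>card P > 0\<close> by (auto simp: e'_def bij_betw_def)
    show "P \<subseteq> e' ` {..<l}"
    proof
      fix p assume "p \<in> P"
      then obtain i where "i < card P" "p = e i"
        using e by (force simp: bij_betw_def)
      then show "p \<in> e' ` {..<l}"
        using assms(3) by (auto simp: e'_def intro!: image_eqI[of _ _ i])
    qed
  qed
  then show ?thesis
    by (intro exI[of _ "fst \<circ> e'"] exI[of _ "snd \<circ> e'"]) simp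
qed

lemma tuple_regular_extend_partial_iso:
  assumes reg: "tuple_regular G l" and "finite P" "P \<noteq> {}" "card P \<le> l"
    and P: "P \<subseteq> carrier G \<times> carrier G" and "partial_iso G P" and z: "z \<in> carrier G"
  shows "\<exists>w\<in>carrier G. partial_iso G (insert (z, w) P)"
proof -
  obtain g h where gh: "(\<lambda>i. (g i, h i)) ` {..<l} = P"
    using ex_tuple_enumerating assms(2-4) by blast
  have "\<forall>i<l. g i \<in> carrier G" "\<forall>i<l. h i \<in> carrier G"
    using gh P by auto
  moreover have "tuple_iso G l g h"
    using gh \<open>partial_iso G P\<close> by (simp add: tuple_iso_iff_partial_iso)
  ultimately obtain \<Psi> where \<Psi>: "bij_betw \<Psi> (carrier G) (carrier G)"
    and ext: "tuple_iso G (Suc l) (g(l := z)) (h(l := \<Psi> z))"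
    using reg z unfolding tuple_regular_def by blast
  have "(\<lambda>i. ((g(l := z)) i, (h(l := \<Psi> z)) i)) ` {..<Suc l} = insert (z, \<Psi> z) P"
    by (auto simp: lessThan_Suc gh[symmetric])
  then have "partial_iso G (insert (z, \<Psi> z) P)"
    using ext by (simp add: tuple_iso_iff_partial_iso)
  moreover have "\<Psi> z \<in> carrier G"
    using \<Psi> z by (auto simp: bij_betw_def)
  ultimately show ?thesis
    by blast
qed

lemma tuple_regular_extend_partial_iso_to_set:
  assumes reg: "tuple_regular G l" and "finite P" "P \<noteq> {}"
    and P: "P \<subseteq> carrier G \<times> carrier G" and "partial_iso G P"
    and "finite A" "A \<subseteq> carrier G" "card P + card A \<le> Suc l"
  shows "\<exists>Q. finite Q \<and> card Q \<le> card P + card A \<and> P \<subseteq> Q \<and> A \<subseteq> fst ` Q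
             \<and> Q \<subseteq> carrier G \<times> carrier G \<and> partial_iso G Q"
  using \<open>finite A\<close> \<open>A \<subseteq> carrier G\<close> \<open>card P + card A \<le> Suc l\<close>
proof (induction A rule: finite_induct)
  case empty
  then show ?case
    using assms by auto
next
  case (insert a A)
  then obtain Q where Q: "finite Q" "card Q \<le> card P + card A" "P \<subseteq> Q" "A \<subseteq> fst ` Q"
    "Q \<subseteq> carrier G \<times> carrier G" "partial_iso G Q"
    by auto
  obtain w where w: "w \<in> carrier G" "partial_iso G (insert (a, w) Q)"
    using tuple_regular_extend_partial_iso[OF reg Q(1) _ _ Q(5,6), of a] Q(2,3) insert \<open>P \<noteq> {}\<close>
    by auto
  have "card (insert (a, w) Q) \<le> card P + card (insert a A)"
    using Q(1,2) insert(1,2) by (simp add: card_insert_if)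
  then show ?case
    using Q w insert(4) by (intro exI[of _ "insert (a, w) Q"]) auto
qed

theorem lemma2p3:
  fixes G :: "('a, 'b) monoid_scheme" and l :: nat
  assumes "group G"
    and "finite (carrier G)"
    and "tuple_regular G l"
    and "\<exists>g. (\<forall>i<l. g i \<in> carrier G) \<and> generate G (g ` {..<l}) = carrier G"
  shows "\<forall>x\<in>carrier G. \<forall>y\<in>carrier G. group.ord G x = group.ord G y \<longrightarrow>
           (\<exists>\<phi>\<in>iso G G. \<phi> x = y)"
proof (intro ballI impI)
  interpret group G by fact
  fix x y assume x: "x \<in> carrier G" and y: "y \<in> carrier G" and "ord x = ord y"
  obtain g where g: "\<forall>i<l. g i \<in> carrier G" and gen: "generate G (g ` {..<l}) = carrier G"
    using assms(4) by blast
  have "partial_iso G {(x, y)}"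
    using cyclic_subgroups_iso[OF x y \<open>ord x = ord y\<close>] by (auto simp: partial_iso_def)
  moreover have "card (g ` {..<l}) \<le> l"
    using card_image_le[of "{..<l}" g] by simp
  ultimately obtain Q where "(x, y) \<in> Q" "g ` {..<l} \<subseteq> fst ` Q"
    and Q: "Q \<subseteq> carrier G \<times> carrier G" "partial_iso G Q"
    using tuple_regular_extend_partial_iso_to_set[OF assms(3), of "{(x, y)}" "g ` {..<l}"] x y g
    by auto
  have "fst ` Q \<subseteq> carrier G" and snd_Q: "snd ` Q \<subseteq> carrier G"
    using Q(1) by auto
  then have "generate G (fst ` Q) = carrier G"
    using mono_generate[OF \<open>g ` {..<l} \<subseteq> fst ` Q\<close>] generate_incl gen by blast
  then obtain \<phi> where "\<phi> \<in> iso G G" "\<forall>(a, b)\<in>Q. \<phi> a = b"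
    using partial_iso_generating_extends_to_automorphism[OF assms(2) Q(2) snd_Q] by auto
  then show "\<exists>\<phi>\<in>iso G G. \<phi> x = y"
    using \<open>(x, y) \<in> Q\<close> by fastforce
qed

end
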